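(* Let $\mathcal{P}=\{x\in\mathbb{R}^n:\tfrac12(\max_i x_i-\min_i x_i)\le1\}$. Let $x\in\mathcal{P}$, let $\bar F$ be a (closed) face of $\mathcal{P}$, and let $B$ be a stochastic $n\times n$ matrix with all diagonal entries positive. Then $Bx\in\bar F$ implies $x\in\bar F$. Furthermore, for any stochastic $n\times n$ matrices $A$ and $C$, $ABCx\in\bar F$ implies $ACx\in\bar F$.
   Context: A stochastic matrix is a nonnegative matrix whose rows sum to $1$. A face of a polyhedron $\mathcal{Q}$ is a non-empty subset $F$ with $F=\mathcal{Q}$ or $F=\mathcal{Q}\cap\{x:b^\top x=c\}$ where $b^\top x\le c$ for all $x\in\mathcal{Q}$. *)

theory Defs
  imports "HOL-Analysis.Analysis"
begin

definition stochastic :: "real^'n^'n \<Rightarrow> bool" where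
  "stochastic A \<longleftrightarrow> (\<forall>i j. 0 \<le> A $ i $ j) \<and> (\<forall>i. (\<Sum>j\<in>UNIV. A $ i $ j) = 1)"

definition Pset :: "(real^'n) set" where
  "Pset = {x. (Max (range (\<lambda>i. x $ i)) - Min (range (\<lambda>i. x $ i))) / 2 \<le> 1}"

definition poly_face :: "(real^'n) set \<Rightarrow> (real^'n) set \<Rightarrow> bool" where
  "poly_face Q F \<longleftrightarrow> F \<noteq> {} \<and>
     (F = Q \<or> (\<exists>b c. (\<forall>x\<in>Q. b \<bullet> x \<le> c) \<and> F = Q \<inter> {x. b \<bullet> x = c}))"

end

theory Submission
  imports Defs
begin

text \<open>A stochastic matrix with positive diagonal is a proper convex combination
  t I + (1 - t) B' with B' stochastic. Stochastic matrices map the polytope P into itself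
  (they can only shrink the spread max - min), so Bx is a proper convex combination of two
  points x and B'x of P. A face F is extreme, hence Bx \<in> F forces x \<in> F. The second claim is the
  same argument applied to the points A(Cx) and A(B'(Cx)).\<close>

lemma stochastic_mat_1: "stochastic (mat 1 :: real^'n^'n)"
  by (simp add: stochastic_def mat_def)

lemma stochastic_row_le_1:
  assumes "stochastic M"
  shows "M $ i $ j \<le> 1"
proof -
  have "M $ i $ j \<le> (\<Sum>k\<in>UNIV. M $ i $ k)"
    by (rule member_le_sum) (use assms in \<open>auto simp: stochastic_def\<close>)
  thus ?thesis using assms by (simp add: stochastic_def)
qed

lemma stochastic_mult_vec_le_Max:
  fixes M :: "real^'n^'n" and u :: "real^'n"
  assumes "stochastic M"
  shows "(M *v u) $ i \<le> Max (range (\<lambda>j. u $ j))"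
proof -
  let ?m = "Max (range (\<lambda>j. u $ j))"
  have "(M *v u) $ i = (\<Sum>j\<in>UNIV. M $ i $ j * u $ j)" by (simp add: matrix_vector_mult_def)
  also have "\<dots> \<le> (\<Sum>j\<in>UNIV. M $ i $ j * ?m)"
    by (intro sum_mono mult_left_mono) (use assms in \<open>auto simp: stochastic_def\<close>)
  also have "\<dots> = ?m" using assms by (simp add: stochastic_def flip: sum_distrib_right)
  finally show ?thesis .
qed

lemma stochastic_mult_vec_ge_Min:
  fixes M :: "real^'n^'n" and u :: "real^'n"
  assumes "stochastic M"
  shows "Min (range (\<lambda>j. u $ j)) \<le> (M *v u) $ i"
proof -
  let ?m = "Min (range (\<lambda>j. u $ j))"
  have "?m = (\<Sum>j\<in>UNIV. M $ i $ j * ?m)" using assms by (simp add: stochastic_def flip: sum_distrib_right)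
  also have "\<dots> \<le> (\<Sum>j\<in>UNIV. M $ i $ j * u $ j)"
    by (intro sum_mono mult_left_mono) (use assms in \<open>auto simp: stochastic_def\<close>)
  also have "\<dots> = (M *v u) $ i" by (simp add: matrix_vector_mult_def)
  finally show ?thesis .
qed

lemma stochastic_mult_vec_Pset:
  fixes M :: "real^'n^'n" and u :: "real^'n"
  assumes "stochastic M" "u \<in> Pset"
  shows "M *v u \<in> Pset"
proof -
  have "Max (range (\<lambda>i. (M *v u) $ i)) \<le> Max (range (\<lambda>j. u $ j))"
    using stochastic_mult_vec_le_Max[OF assms(1)] by (simp add: Max_le_iff)
  moreover have "Min (range (\<lambda>j. u $ j)) \<le> Min (range (\<lambda>i. (M *v u) $ i))"
    using stochastic_mult_vec_ge_Min[OF assms(1)] by (simp add: Min_ge_iff)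
  moreover have "(Max (range (\<lambda>j. u $ j)) - Min (range (\<lambda>j. u $ j))) / 2 \<le> 1"
    using assms(2) by (simp add: Pset_def)
  ultimately have "(Max (range (\<lambda>i. (M *v u) $ i)) - Min (range (\<lambda>i. (M *v u) $ i))) / 2 \<le> 1"
    by (smt (verit) divide_right_mono)
  then show ?thesis unfolding Pset_def by simp
qed

lemma poly_face_extreme:
  fixes u v :: "real^'n"
  assumes "poly_face Q F" "u \<in> Q" "v \<in> Q" "0 < t" "t < 1"
    and "t *\<^sub>R u + (1 - t) *\<^sub>R v \<in> F"
  shows "u \<in> F"
  using assms(1) unfolding poly_face_def
proof (elim conjE disjE exE)
  assume "F = Q" thus ?thesis using assms(2) by simp
next
  fix b c assume valid: "\<forall>x\<in>Q. b \<bullet> x \<le> c" and F: "F = Q \<inter> {x. b \<bullet> x = c}"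
  have "t * (c - b \<bullet> u) + (1 - t) * (c - b \<bullet> v) = 0"
    using assms(6) F by (simp add: inner_add_right algebra_simps)
  moreover have "0 \<le> t * (c - b \<bullet> u)" "0 \<le> (1 - t) * (c - b \<bullet> v)"
    using valid assms(2-5) by auto
  ultimately have "t * (c - b \<bullet> u) = 0" by linarith
  thus ?thesis using F assms(2,4) by simp
qed

lemma stochastic_pos_diag_decomp:
  fixes B :: "real^'n^'n"
  assumes "stochastic B" "\<forall>i. 0 < B $ i $ i"
  obtains t B' where "0 < t" "t < 1" "stochastic B'" "B = t *\<^sub>R mat 1 + (1 - t) *\<^sub>R B'"
proof -
  define t where "t = Min (range (\<lambda>i. B $ i $ i)) / 2"
  have pos: "0 < Min (range (\<lambda>i. B $ i $ i))" using assms(2) by (simp add: Min_gr_iff)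
  then have t0: "0 < t" by (simp add: t_def)
  have tle: "t < B $ i $ i" for i
  proof -
    have "Min (range (\<lambda>i. B $ i $ i)) \<le> B $ i $ i" by simp
    with pos show ?thesis unfolding t_def by linarith
  qed
  have t1: "t < 1" using tle stochastic_row_le_1[OF assms(1)] by (meson order.strict_trans2)
  define B' where "B' = (1 / (1 - t)) *\<^sub>R (B - t *\<^sub>R mat 1)"
  have entry: "B' $ i $ j = (B $ i $ j - (if i = j then t else 0)) / (1 - t)" for i j
    by (simp add: B'_def mat_def)
  have "stochastic B'"
    unfolding stochastic_def
  proof (intro conjI allI)
    fix i j show "0 \<le> B' $ i $ j"
      unfolding entry using t1 tle[of i] assms(1) by (auto simp: stochastic_def less_imp_le)
  next
    fix i
    have "(\<Sum>j\<in>UNIV. B' $ i $ j)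
        = ((\<Sum>j\<in>UNIV. B $ i $ j) - (\<Sum>j\<in>UNIV. (if i = j then t else 0))) / (1 - t)"
      unfolding entry sum_divide_distrib[symmetric] by (simp add: sum_subtractf)
    also have "\<dots> = 1" using assms(1) t1 by (simp add: stochastic_def)
    finally show "(\<Sum>j\<in>UNIV. B' $ i $ j) = 1" .
  qed
  moreover have "B = t *\<^sub>R mat 1 + (1 - t) *\<^sub>R B'" using t1 by (simp add: B'_def)
  ultimately show ?thesis using that t0 t1 by blast
qed

lemma poly_face_Pset_absorbs_pos_diag:
  fixes A B :: "real^'n^'n" and z :: "real^'n"
  assumes "poly_face Pset F" "stochastic A" "stochastic B" "\<forall>i. 0 < B $ i $ i"
    and "z \<in> Pset" "A *v (B *v z) \<in> F"
  shows "A *v z \<in> F"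
proof -
  obtain t B' where t: "0 < t" "t < 1" and B': "stochastic B'"
    and B: "B = t *\<^sub>R mat 1 + (1 - t) *\<^sub>R B'"
    using stochastic_pos_diag_decomp[OF assms(3,4)] .
  have "A *v (B *v z) = t *\<^sub>R (A *v z) + (1 - t) *\<^sub>R (A *v (B' *v z))"
    by (simp add: B matrix_vector_mult_add_rdistrib matrix_vector_right_distrib
        matrix_vector_mult_scaleR flip: scaleR_matrix_vector_assoc)
  with assms(6) show ?thesis
    using poly_face_extreme[OF assms(1) stochastic_mult_vec_Pset[OF assms(2,5)]
        stochastic_mult_vec_Pset[OF assms(2) stochastic_mult_vec_Pset[OF B' assms(5)]] t]
    by simp
qed

theorem lemma6:
  fixes x :: "real^'n" and F :: "(real^'n) set" and A B C :: "real^'n^'n"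
  assumes "x \<in> Pset"
    and "poly_face Pset F"
    and "stochastic B"
    and "\<forall>i. 0 < B $ i $ i"
  shows "(B *v x \<in> F \<longrightarrow> x \<in> F) \<and>
         (stochastic A \<longrightarrow> stochastic C \<longrightarrow> (A ** B ** C) *v x \<in> F \<longrightarrow> (A ** C) *v x \<in> F)"
proof (intro conjI impI)
  assume "B *v x \<in> F"
  then show "x \<in> F"
    using poly_face_Pset_absorbs_pos_diag[OF assms(2) stochastic_mat_1 assms(3,4,1)] by simp
next
  assume A: "stochastic A" and C: "stochastic C" and "(A ** B ** C) *v x \<in> F"
  then have "A *v (B *v (C *v x)) \<in> F" by (simp add: matrix_vector_mul_assoc matrix_mul_assoc)
  from poly_face_Pset_absorbs_pos_diag[OF assms(2) A assms(3,4)
      stochastic_mult_vec_Pset[OF C assms(1)] this]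
  show "(A ** C) *v x \<in> F" by (simp add: matrix_vector_mul_assoc)
qed

end
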